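(* Let $p$ be a minimal idempotent in $(\beta\mathbb{N}, +)$, let $\langle C_n \rangle_{n=1}^\infty$ be a sequence of members of $p$, and let $\langle a_n \rangle_{n=1}^\infty$ be a sequence in $\mathbb{N}$. Then for each $n \in \mathbb{N}$ there exists an arithmetic progression $Y_n \subseteq C_n$ of length $a_n$ such that for every nonempty finite $F \subseteq \mathbb{N}$, $\sum_{n \in F} Y_n \subseteq C_{\min F}$.
   Context: $\beta\mathbb{N}$ is the set of ultrafilters on $\mathbb{N}$ with the extension of addition $p+q = \{A \subseteq \mathbb{N} : \{x : -x+A \in q\} \in p\}$, $-x+A=\{y: x+y\in A\}$, a compact right topological semigroup. A minimal idempotent is an idempotent in the smallest two-sided ideal $K(\beta\mathbb{N})$. An arithmetic progression of length $k$ is a set $\{a, a+d, \ldots, a+(k-1)d\}$ with $a,d\in\mathbb{N}$. For finite $F \subseteq \mathbb{N}$ and nonempty sets $Y_n$, $\sum_{n \in F} Y_n = \{\sum_{n \in F} a_n : a_n \in Y_n \text{ for each } n \in F\}$. *)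

theory Defs
  imports Main
begin

text \<open>The positive integers \<open>\<nat> = {1,2,...}\<close>, represented inside type nat.\<close>
definition Npos :: "nat set" where
  "Npos = {n. 1 \<le> n}"

definition is_ultrafilter :: "nat set set \<Rightarrow> bool" where
  "is_ultrafilter p \<longleftrightarrow>
     p \<subseteq> Pow Npos \<and> Npos \<in> p \<and> {} \<notin> p \<and>
     (\<forall>A\<in>p. \<forall>B. A \<subseteq> B \<and> B \<subseteq> Npos \<longrightarrow> B \<in> p) \<and>
     (\<forall>A\<in>p. \<forall>B\<in>p. A \<inter> B \<in> p) \<and>
     (\<forall>A. A \<subseteq> Npos \<longrightarrow> A \<in> p \<or> Npos - A \<in> p)"

definition betaN :: "nat set set set" where
  "betaN = {p. is_ultrafilter p}"

definition shift_left :: "nat \<Rightarrow> nat set \<Rightarrow> nat set" where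
  "shift_left x A = {y \<in> Npos. x + y \<in> A}"

definition uplus :: "nat set set \<Rightarrow> nat set set \<Rightarrow> nat set set" (infixl "\<oplus>" 65) where
  "p \<oplus> q = {A. A \<subseteq> Npos \<and> {x \<in> Npos. shift_left x A \<in> q} \<in> p}"

definition is_ideal :: "nat set set set \<Rightarrow> bool" where
  "is_ideal I \<longleftrightarrow> I \<noteq> {} \<and> I \<subseteq> betaN \<and>
     (\<forall>p\<in>betaN. \<forall>q\<in>I. p \<oplus> q \<in> I \<and> q \<oplus> p \<in> I)"

definition K_betaN :: "nat set set set" where
  "K_betaN = \<Inter> {I. is_ideal I}"

definition minimal_idempotent :: "nat set set \<Rightarrow> bool" where
  "minimal_idempotent p \<longleftrightarrow> p \<in> betaN \<and> p \<oplus> p = p \<and> p \<in> K_betaN"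

definition is_AP :: "nat set \<Rightarrow> nat \<Rightarrow> bool" where
  "is_AP Y k \<longleftrightarrow> (\<exists>a d. 1 \<le> a \<and> 1 \<le> d \<and> Y = {a + i * d | i. i < k})"

definition setsum_sets :: "nat set \<Rightarrow> (nat \<Rightarrow> nat set) \<Rightarrow> nat set" where
  "setsum_sets F Y = {(\<Sum>n\<in>F. f n) | f. \<forall>n\<in>F. f n \<in> Y n}"

end

theory Submission
  imports Defs "HOL-Library.FuncSet"
begin

text \<open>By van der Waerden's theorem, proved below by colour focusing, the sets containing arbitrarily
  long arithmetic progressions are partition regular, so some ultrafilter consists of such sets. The
  ultrafilters of this kind form a two-sided ideal of \<open>\<beta>\<nat>\<close>, which therefore contains \<open>K(\<beta>\<nat>)\<close>:
  every member of a minimal idempotent \<open>p\<close> contains arbitrarily long progressions.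
  For idempotent \<open>p\<close> and \<open>A \<in> p\<close>, the set \<open>A\<^sup>\<star> = {x \<in> A. -x + A \<in> p}\<close> belongs to \<open>p\<close>, and
  so does \<open>-x + A\<^sup>\<star>\<close> for every \<open>x \<in> A\<^sup>\<star>\<close>. The progression \<open>Y\<^sub>n\<close> is then chosen inside the member
  \<open>C\<^sub>n\<^sup>\<star> \<inter> \<Inter> {-x + C\<^sub>m\<^sup>\<star>}\<close> of \<open>p\<close>, where \<open>x\<close> ranges over the finitely many sums
  over nonempty \<open>F \<subseteq> {1..n-1}\<close> already formed and \<open>m = min F\<close>.\<close>

section \<open>Van der Waerden's theorem\<close>

text \<open>\<open>vdW k\<close> asks for \<open>k\<close>-term progressions and \<open>mono_AP k\<close> for \<open>(k + 1)\<close>-term ones; the bound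
  \<open>a + k d < N\<close> leaves room for the focus \<open>a + k d\<close>.\<close>
definition vdW :: "nat \<Rightarrow> bool" where
  "vdW k \<longleftrightarrow> (\<forall>r. \<exists>N. \<forall>c::nat \<Rightarrow> nat. (\<forall>x<N. c x < r) \<longrightarrow>
     (\<exists>a d. 0 < d \<and> a + k * d < N \<and> (\<forall>i<k. c (a + i * d) = c a)))"

definition mono_AP :: "nat \<Rightarrow> nat \<Rightarrow> (nat \<Rightarrow> nat) \<Rightarrow> bool" where
  "mono_AP k M c \<longleftrightarrow> (\<exists>a d. 0 < d \<and> a + k * d < M \<and> (\<forall>i\<le>k. c (a + i * d) = c a))"

definition focused :: "nat \<Rightarrow> (nat \<Rightarrow> nat) \<Rightarrow> nat \<Rightarrow> nat \<Rightarrow> nat \<Rightarrow> bool" where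
  "focused k c f a d \<longleftrightarrow> a + k * d = f \<and> (\<forall>i<k. c (a + i * d) = c a)"

definition focused_fan :: "nat \<Rightarrow> nat \<Rightarrow> nat \<Rightarrow> (nat \<Rightarrow> nat) \<Rightarrow> bool" where
  "focused_fan k s M c \<longleftrightarrow> (\<exists>f A D. f < M \<and> inj_on (\<lambda>j. c (A j)) {..<s} \<and>
     (\<forall>j<s. 0 < D j \<and> focused k c f (A j) (D j)))"

lemma mono_AP_if_focused:
  assumes "focused k c f a d" "0 < d" "c f = c a" "f < M"
  shows "mono_AP k M c"
proof -
  have "c (a + i * d) = c a" if "i \<le> k" for i
    using assms that unfolding focused_def by (cases "i < k") auto
  then show ?thesis
    using assms unfolding focused_def mono_AP_def by blast
qed

lemma mono_AP_shift:
  assumes "mono_AP k m (\<lambda>x. c (u + x))" "u + m \<le> M"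
  shows "mono_AP k M c"
proof -
  obtain a d where "0 < d" "a + k * d < m" "\<forall>i\<le>k. c (u + (a + i * d)) = c (u + a)"
    using assms(1) unfolding mono_AP_def by blast
  moreover have "u + a + k * d < M"
    using assms(2) \<open>a + k * d < m\<close> by linarith
  ultimately show ?thesis
    unfolding mono_AP_def by (metis add.assoc)
qed

lemma focused_shift: "focused k (\<lambda>x. c (u + x)) f a d \<Longrightarrow> focused k c (u + f) (u + a) d"
  unfolding focused_def by (simp add: add.assoc)

lemma block_index_less:
  fixes t x :: nat
  assumes "t < N" "x < m"
  shows "t * m + x < N * m"
proof -
  have "t * m + x < Suc t * m" using assms(2) by simp
  also have "\<dots> \<le> N * m" using assms(1) by (intro mult_right_mono) auto
  finally show ?thesis .
qed

lemma vdW_monochromatic_blocks: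
  assumes "vdW k"
  shows "\<exists>N. \<forall>c::nat \<Rightarrow> nat. (\<forall>x<N * m. c x < r) \<longrightarrow> (\<exists>b e. 0 < e \<and> b + k * e < N \<and>
           (\<forall>i<k. \<forall>x<m. c ((b + i * e) * m + x) = c (b * m + x)))"
proof -
  define X where "X = PiE {..<m} (\<lambda>_. {..<r})"
  have "finite X"
    unfolding X_def by (intro finite_PiE) auto
  then obtain h where h: "bij_betw h X {0..<card X}"
    using ex_bij_betw_finite_nat by blast
  obtain N where N: "\<And>c::nat \<Rightarrow> nat. \<forall>x<N. c x < card X \<Longrightarrow>
      \<exists>a d. 0 < d \<and> a + k * d < N \<and> (\<forall>i<k. c (a + i * d) = c a)"
    using assms unfolding vdW_def by blast
  show ?thesis
  proof (rule exI[of _ N], intro allI impI)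
    fix c :: "nat \<Rightarrow> nat"
    assume c: "\<forall>x<N * m. c x < r"
    \<comment> \<open>The block \<open>[t m, (t + 1) m)\<close> is coloured by the code of its colouring pattern.\<close>
    define block where "block t = restrict (\<lambda>x. c (t * m + x)) {..<m}" for t
    have block_in: "block t \<in> X" if "t < N" for t
      using c block_index_less[OF that] unfolding X_def block_def by auto
    then have "\<forall>t<N. h (block t) < card X"
      using bij_betw_apply[OF h] by fastforce
    then obtain b e where be: "0 < e" "b + k * e < N" "\<forall>i<k. h (block (b + i * e)) = h (block b)"
      using N[of "\<lambda>t. h (block t)"] by blast
    have same_block: "block (b + i * e) = block b" if "i < k" for i
    proof -
      have "i * e \<le> k * e"
        using that by simp
      then have "b + i * e < N" "b < N"
        using be(2) by linarith+
      then show ?thesis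
        using inj_onD[OF bij_betw_imp_inj_on[OF h]] be(3) block_in that by blast
    qed
    have "c ((b + i * e) * m + x) = c (b * m + x)" if "i < k" "x < m" for i x
      using fun_cong[OF same_block[OF that(1)], of x] that(2) by (simp add: block_def)
    then show "\<exists>b e. 0 < e \<and> b + k * e < N \<and> (\<forall>i<k. \<forall>x<m. c ((b + i * e) * m + x) = c (b * m + x))"
      using be by blast
  qed
qed

lemma focused_across_blocks:
  assumes blocks: "\<forall>i<k. \<forall>x<m. c ((b + i * e) * m + x) = c (b * m + x)"
    and foc: "focused k (\<lambda>x. c (b * m + x)) f a d" and "f < m"
  shows "focused k c ((b + k * e) * m + f) (b * m + a) (d + e * m)"
  unfolding focused_def
proof (intro conjI allI impI)
  show "b * m + a + k * (d + e * m) = (b + k * e) * m + f"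
    using foc unfolding focused_def by (simp add: algebra_simps)
  fix i assume "i < k"
  then have "i * d \<le> k * d"
    by simp
  then have "a + i * d < m"
    using foc \<open>f < m\<close> unfolding focused_def by linarith
  have "c (b * m + a + i * (d + e * m)) = c ((b + i * e) * m + (a + i * d))"
    by (simp add: algebra_simps)
  also have "\<dots> = c (b * m + (a + i * d))"
    using blocks \<open>i < k\<close> \<open>a + i * d < m\<close> by blast
  also have "\<dots> = c (b * m + a)"
    using foc \<open>i < k\<close> unfolding focused_def by blast
  finally show "c (b * m + a + i * (d + e * m)) = c (b * m + a)" .
qed

lemma focused_fanI:
  assumes "f < M" "inj_on (\<lambda>j. c (A j)) {..<s}" "\<And>j. j < s \<Longrightarrow> 0 < D j \<and> focused k c f (A j) (D j)"
  shows "focused_fan k s M c"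
  using assms unfolding focused_fan_def by blast

lemma focused_fan_extend:
  assumes "0 < e" "b + k * e < N"
    and blocks: "\<forall>i<k. \<forall>x<m. c ((b + i * e) * m + x) = c (b * m + x)"
    and "focused_fan k s m (\<lambda>x. c (b * m + x))"
  shows "mono_AP k (N * m) c \<or> focused_fan k (Suc s) (N * m) c"
proof -
  obtain f A D where f: "f < m" and inj: "inj_on (\<lambda>j. c (b * m + A j)) {..<s}"
    and foc: "\<forall>j<s. 0 < D j \<and> focused k (\<lambda>x. c (b * m + x)) f (A j) (D j)"
    using assms(4) unfolding focused_fan_def by blast
  have "b < N"
    using assms(2) by linarith
  consider (old) j where "j < s" "c (b * m + A j) = c (b * m + f)"
    | (new) "\<forall>j<s. c (b * m + A j) \<noteq> c (b * m + f)"
    by blast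
  then show ?thesis
  proof cases
    case old
    have "focused k c (b * m + f) (b * m + A j) (D j)" "0 < D j"
      using foc old(1) by (simp_all add: focused_shift)
    then have "mono_AP k (N * m) c"
      using mono_AP_if_focused old(2) block_index_less[OF \<open>b < N\<close> f] by metis
    then show ?thesis ..
  next
    case new
    \<comment> \<open>The focus of the old fan joins as a progression of difference 0, before lifting across blocks.\<close>
    define A' where "A' = A(s := f)"
    define D' where "D' = D(s := 0)"
    have "focused k (\<lambda>x. c (b * m + x)) f (A' j) (D' j)" if "j < Suc s" for j
      using foc that unfolding A'_def D'_def focused_def by (cases "j = s") auto
    then have "focused k c ((b + k * e) * m + f) (b * m + A' j) (D' j + e * m)" if "j < Suc s" for j
      using focused_across_blocks[OF blocks _ f] that by presburger
    moreover have "0 < D' j + e * m" for j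
      using \<open>0 < e\<close> f by simp
    moreover have "inj_on (\<lambda>j. c (b * m + A' j)) {..<Suc s}"
      using inj new unfolding A'_def lessThan_Suc by (auto simp: inj_on_def)
    moreover have "(b + k * e) * m + f < N * m"
      using block_index_less[OF assms(2) f] .
    ultimately have "focused_fan k (Suc s) (N * m) c"
      by (intro focused_fanI[where A = "\<lambda>j. b * m + A' j" and D = "\<lambda>j. D' j + e * m"]) auto
    then show ?thesis ..
  qed
qed

lemma mono_AP_or_focused_fan:
  assumes "vdW k"
  shows "\<exists>M. \<forall>c. (\<forall>x<M. c x < r) \<longrightarrow> mono_AP k M c \<or> focused_fan k s M c"
proof (induction s)
  case 0
  show ?case
    by (rule exI[of _ 1]) (auto simp: focused_fan_def)
next
  case (Suc s)
  then obtain m where m: "\<forall>c. (\<forall>x<m. c x < r) \<longrightarrow> mono_AP k m c \<or> focused_fan k s m c"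
    by blast
  obtain N where N: "\<forall>c::nat \<Rightarrow> nat. (\<forall>x<N * m. c x < r) \<longrightarrow> (\<exists>b e. 0 < e \<and> b + k * e < N \<and>
      (\<forall>i<k. \<forall>x<m. c ((b + i * e) * m + x) = c (b * m + x)))"
    using vdW_monochromatic_blocks[OF assms] by blast
  show ?case
  proof (rule exI[of _ "N * m"], intro allI impI)
    fix c :: "nat \<Rightarrow> nat"
    assume c: "\<forall>x<N * m. c x < r"
    then obtain b e where be: "0 < e" "b + k * e < N"
      and blocks: "\<forall>i<k. \<forall>x<m. c ((b + i * e) * m + x) = c (b * m + x)"
      using N by blast
    have "b < N"
      using be(2) by linarith
    have "c (b * m + x) < r" if "x < m" for x
      using c block_index_less[OF \<open>b < N\<close> that] by blast
    then consider "mono_AP k m (\<lambda>x. c (b * m + x))" | "focused_fan k s m (\<lambda>x. c (b * m + x))"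
      using m[rule_format, of "\<lambda>x. c (b * m + x)"] by blast
    then show "mono_AP k (N * m) c \<or> focused_fan k (Suc s) (N * m) c"
    proof cases
      case 1
      have "b * m + m \<le> N * m"
        using \<open>b < N\<close> mult_le_mono1[of "Suc b" N m] by simp
      then show ?thesis
        using mono_AP_shift[OF 1] by blast
    next
      case 2
      then show ?thesis
        by (rule focused_fan_extend[OF be blocks])
    qed
  qed
qed

text \<open>With as many focused progressions as colours, the focus repeats one of their colours.\<close>
lemma mono_AP_if_focused_fan_saturated:
  assumes "focused_fan k r M c" "\<forall>x<M. c x < r"
  shows "mono_AP k M c"
proof -
  obtain f A D where f: "f < M" and inj: "inj_on (\<lambda>j. c (A j)) {..<r}"
    and foc: "\<forall>j<r. 0 < D j \<and> focused k c f (A j) (D j)"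
    using assms(1) unfolding focused_fan_def by blast
  have "A j < M" if "j < r" for j
    using foc f that unfolding focused_def by fastforce
  then have "(\<lambda>j. c (A j)) ` {..<r} \<subseteq> {..<r}"
    using assms(2) by auto
  then have "(\<lambda>j. c (A j)) ` {..<r} = {..<r}"
    using endo_inj_surj[OF _ _ inj] by blast
  moreover have "c f \<in> {..<r}"
    using assms(2) f by blast
  ultimately obtain j where "j < r" "c f = c (A j)"
    by (metis imageE lessThan_iff)
  then show ?thesis
    using foc f by (intro mono_AP_if_focused[of k c f "A j" "D j"]) auto
qed

lemma vdW_Suc:
  assumes "vdW k" "0 < k"
  shows "vdW (Suc k)"
  unfolding vdW_def
proof
  fix r
  obtain M where M: "\<forall>c. (\<forall>x<M. c x < r) \<longrightarrow> mono_AP k M c \<or> focused_fan k r M c"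
    using mono_AP_or_focused_fan[OF assms(1)] by blast
  show "\<exists>N. \<forall>c::nat \<Rightarrow> nat. (\<forall>x<N. c x < r) \<longrightarrow>
     (\<exists>a d. 0 < d \<and> a + Suc k * d < N \<and> (\<forall>i<Suc k. c (a + i * d) = c a))"
  proof (rule exI[of _ "2 * M"], intro allI impI)
    fix c :: "nat \<Rightarrow> nat"
    assume "\<forall>x<2 * M. c x < r"
    then have "\<forall>x<M. c x < r"
      by simp
    then have "mono_AP k M c"
      using M mono_AP_if_focused_fan_saturated by blast
    then obtain a d where ad: "0 < d" "a + k * d < M" "\<forall>i\<le>k. c (a + i * d) = c a"
      unfolding mono_AP_def by blast
    have "d \<le> k * d"
      using \<open>0 < k\<close> by simp
    moreover have "a + Suc k * d = a + k * d + d"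
      by simp
    ultimately have "a + Suc k * d < 2 * M"
      using ad(2) by linarith
    then show "\<exists>a d. 0 < d \<and> a + Suc k * d < 2 * M \<and> (\<forall>i<Suc k. c (a + i * d) = c a)"
      using ad by (auto simp: less_Suc_eq_le)
  qed
qed

theorem van_der_Waerden: "vdW k"
proof -
  have "vdW (Suc n)" for n
  proof (induction n)
    case 0
    show ?case
      unfolding vdW_def by (intro allI exI[of _ 2] impI exI[of _ 0] exI[of _ 1]) auto
  next
    case (Suc n)
    then show ?case
      using vdW_Suc by blast
  qed
  moreover have "vdW 0"
    unfolding vdW_def by (intro allI exI[of _ 1] impI exI[of _ 0] exI[of _ 1]) auto
  ultimately show ?thesis
    by (cases k) auto
qed

definition has_AP :: "nat set \<Rightarrow> nat \<Rightarrow> bool" where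
  "has_AP A k \<longleftrightarrow> (\<exists>a d. 1 \<le> a \<and> 1 \<le> d \<and> (\<forall>i<k. a + i * d \<in> A))"

definition AP_rich :: "nat set \<Rightarrow> bool" where
  "AP_rich A \<longleftrightarrow> (\<forall>k. has_AP A k)"

lemma has_AP_mono: "has_AP A k \<Longrightarrow> j \<le> k \<Longrightarrow> A \<subseteq> B \<Longrightarrow> has_AP B j"
  unfolding has_AP_def by (meson less_le_trans subsetD)

lemma AP_rich_mono: "AP_rich A \<Longrightarrow> A \<subseteq> B \<Longrightarrow> AP_rich B"
  unfolding AP_rich_def using has_AP_mono by blast

lemma is_AP_subset_if_has_AP:
  assumes "has_AP A k"
  shows "\<exists>Y\<subseteq>A. is_AP Y k"
proof -
  obtain a d where "1 \<le> a" "1 \<le> d" "\<forall>i<k. a + i * d \<in> A"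
    using assms unfolding has_AP_def by blast
  then show ?thesis
    unfolding is_AP_def by (intro exI[of _ "{a + i * d | i. i < k}"]) blast
qed

lemma is_AP_finite: "is_AP Y k \<Longrightarrow> finite Y"
  unfolding is_AP_def by auto

lemma has_AP_Un:
  "\<exists>N. \<forall>A B. has_AP (A \<union> B) N \<longrightarrow> has_AP A k \<or> has_AP B k"
proof -
  obtain N where N: "\<forall>c::nat \<Rightarrow> nat. (\<forall>x<N. c x < 2) \<longrightarrow>
      (\<exists>a d. 0 < d \<and> a + k * d < N \<and> (\<forall>i<k. c (a + i * d) = c a))"
    using van_der_Waerden[of k] unfolding vdW_def by blast
  have "has_AP A k \<or> has_AP B k" if AB: "has_AP (A \<union> B) N" for A B
  proof -
    obtain a d where ad: "1 \<le> a" "1 \<le> d" "\<forall>i<N. a + i * d \<in> A \<union> B"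
      using AB unfolding has_AP_def by blast
    define c where "c i = (if a + i * d \<in> A then 0 else 1 :: nat)" for i
    obtain a' e where ae: "0 < e" "a' + k * e < N" "\<forall>i<k. c (a' + i * e) = c a'"
      using N[rule_format, of c] by (force simp: c_def)
    define S where "S = (if c a' = 0 then A else B)"
    have "a + (a' + i * e) * d \<in> S" if "i < k" for i
    proof -
      have "i * e \<le> k * e"
        using that by simp
      then have "a' + i * e < N"
        using ae(2) by linarith
      then have "a + (a' + i * e) * d \<in> A \<union> B"
        using ad(3) by blast
      then show ?thesis
        using ae(3) that unfolding S_def c_def by (auto split: if_splits)
    qed
    then have "has_AP S k"
      unfolding has_AP_def using ad ae(1)
      by (intro exI[of _ "a + a' * d"] exI[of _ "e * d"]) (auto simp: algebra_simps)
    then show ?thesis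
      unfolding S_def by (auto split: if_splits)
  qed
  then show ?thesis
    by blast
qed

lemma AP_rich_Un: "AP_rich (A \<union> B) \<Longrightarrow> AP_rich A \<or> AP_rich B"
proof (rule ccontr)
  assume rich: "AP_rich (A \<union> B)" and "\<not> (AP_rich A \<or> AP_rich B)"
  then obtain kA kB where "\<not> has_AP A kA" "\<not> has_AP B kB"
    unfolding AP_rich_def by blast
  moreover obtain N where "\<forall>A B. has_AP (A \<union> B) N \<longrightarrow> has_AP A (max kA kB) \<or> has_AP B (max kA kB)"
    using has_AP_Un by blast
  ultimately show False
    using rich has_AP_mono[of _ "max kA kB"] unfolding AP_rich_def by (meson max.cobounded1 max.cobounded2 order_refl)
qed

lemma AP_rich_Npos: "AP_rich Npos"
  unfolding AP_rich_def has_AP_def Npos_def by (intro allI exI[of _ 1]) auto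

lemma not_AP_rich_empty: "\<not> AP_rich {}"
  unfolding AP_rich_def has_AP_def by (metis empty_iff zero_less_one)

section \<open>Ultrafilters inside a partition regular family\<close>

definition is_filter :: "nat set set \<Rightarrow> bool" where
  "is_filter F \<longleftrightarrow> F \<subseteq> Pow Npos \<and> Npos \<in> F \<and>
     (\<forall>A\<in>F. \<forall>B. A \<subseteq> B \<and> B \<subseteq> Npos \<longrightarrow> B \<in> F) \<and> (\<forall>A\<in>F. \<forall>B\<in>F. A \<inter> B \<in> F)"

lemma is_ultrafilter_iff_filter:
  "is_ultrafilter q \<longleftrightarrow> is_filter q \<and> {} \<notin> q \<and> (\<forall>A. A \<subseteq> Npos \<longrightarrow> A \<in> q \<or> Npos - A \<in> q)"
  unfolding is_ultrafilter_def is_filter_def by (simp only: conj_ac)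

lemma is_filterD:
  assumes "is_filter F"
  shows "A \<in> F \<Longrightarrow> A \<subseteq> Npos" "Npos \<in> F"
    "A \<in> F \<Longrightarrow> A \<subseteq> B \<Longrightarrow> B \<subseteq> Npos \<Longrightarrow> B \<in> F" "A \<in> F \<Longrightarrow> B \<in> F \<Longrightarrow> A \<inter> B \<in> F"
  using assms unfolding is_filter_def by auto

lemma is_filter_Union_chain:
  assumes "C \<noteq> {}" "subset.chain {F. is_filter F \<and> F \<subseteq> R} C"
  shows "is_filter (\<Union>C) \<and> \<Union>C \<subseteq> R"
proof -
  have filters: "\<And>F. F \<in> C \<Longrightarrow> is_filter F" "\<And>F. F \<in> C \<Longrightarrow> F \<subseteq> R"
    and chain: "\<And>F G. F \<in> C \<Longrightarrow> G \<in> C \<Longrightarrow> F \<subseteq> G \<or> G \<subseteq> F"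
    using assms(2) unfolding subset.chain_def by blast+
  have "A \<inter> B \<in> \<Union>C" if AB: "A \<in> \<Union>C" "B \<in> \<Union>C" for A B
  proof -
    obtain F G where "F \<in> C" "G \<in> C" "A \<in> F" "B \<in> G"
      using AB by blast
    then obtain H where "H \<in> C" "A \<in> H" "B \<in> H"
      using chain by blast
    then show ?thesis
      using is_filterD(4)[OF filters(1)] by blast
  qed
  moreover obtain F where "F \<in> C"
    using assms(1) by blast
  then have "Npos \<in> \<Union>C"
    using is_filterD(2)[OF filters(1)] by blast
  moreover have "B \<in> \<Union>C" if "A \<in> \<Union>C" "A \<subseteq> B" "B \<subseteq> Npos" for A B
    using that is_filterD(3)[OF filters(1)] by blast
  moreover have "\<Union>C \<subseteq> Pow Npos"
    using is_filterD(1)[OF filters(1)] by blast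
  ultimately show ?thesis
    unfolding is_filter_def using filters(2) by blast
qed

text \<open>Otherwise the filter generated by \<open>M\<close> and \<open>A\<close> would be a larger filter inside \<open>R\<close>.\<close>
lemma maximal_filter_trace_escapes:
  assumes M: "is_filter M" "M \<subseteq> R"
    and max: "\<forall>X. is_filter X \<and> X \<subseteq> R \<and> M \<subseteq> X \<longrightarrow> X = M"
    and up: "\<forall>X Y. X \<in> R \<and> X \<subseteq> Y \<longrightarrow> Y \<in> R"
    and A: "A \<subseteq> Npos" "A \<notin> M"
  shows "\<exists>C\<in>M. C \<inter> A \<notin> R"
proof (rule ccontr)
  assume "\<not> (\<exists>C\<in>M. C \<inter> A \<notin> R)"
  then have traces: "\<And>C. C \<in> M \<Longrightarrow> C \<inter> A \<in> R"
    by blast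
  define MA where "MA = {B. B \<subseteq> Npos \<and> (\<exists>C\<in>M. C \<inter> A \<subseteq> B)}"
  have "B1 \<inter> B2 \<in> MA" if B: "B1 \<in> MA" "B2 \<in> MA" for B1 B2
  proof -
    obtain C1 C2 where "C1 \<in> M" "C2 \<in> M" "C1 \<inter> A \<subseteq> B1" "C2 \<inter> A \<subseteq> B2"
      using B unfolding MA_def by blast
    moreover have "C1 \<inter> C2 \<in> M"
      using is_filterD(4)[OF M(1)] calculation by blast
    ultimately show ?thesis
      using B unfolding MA_def by blast
  qed
  moreover have "Npos \<in> MA"
    using is_filterD(2)[OF M(1)] unfolding MA_def by blast
  moreover have "B \<in> MA" if "X \<in> MA" "X \<subseteq> B" "B \<subseteq> Npos" for X B
    using that unfolding MA_def by blast
  moreover have "MA \<subseteq> Pow Npos"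
    unfolding MA_def by blast
  ultimately have "is_filter MA"
    unfolding is_filter_def by blast
  moreover have "MA \<subseteq> R"
    unfolding MA_def using traces up by blast
  moreover have "M \<subseteq> MA"
    using is_filterD(1)[OF M(1)] unfolding MA_def by blast
  ultimately have "MA = M"
    using max by blast
  moreover have "A \<in> MA"
    unfolding MA_def using A(1) is_filterD(2)[OF M(1)] by blast
  ultimately show False
    using A(2) by simp
qed

theorem ultrafilter_within_partition_regular:
  assumes "Npos \<in> R" "{} \<notin> R"
    and up: "\<And>X Y. X \<in> R \<Longrightarrow> X \<subseteq> Y \<Longrightarrow> Y \<in> R"
    and partition: "\<And>X Y. X \<union> Y \<in> R \<Longrightarrow> X \<in> R \<or> Y \<in> R"
  shows "\<exists>q. is_ultrafilter q \<and> q \<subseteq> R"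
proof -
  have "{Npos} \<in> {F. is_filter F \<and> F \<subseteq> R}"
    using assms(1) unfolding is_filter_def by auto
  then have "\<exists>M\<in>{F. is_filter F \<and> F \<subseteq> R}. \<forall>X\<in>{F. is_filter F \<and> F \<subseteq> R}. M \<subseteq> X \<longrightarrow> X = M"
    using is_filter_Union_chain by (intro subset_Zorn_nonempty) auto
  then obtain M where "M \<in> {F. is_filter F \<and> F \<subseteq> R}"
    and max: "\<forall>X\<in>{F. is_filter F \<and> F \<subseteq> R}. M \<subseteq> X \<longrightarrow> X = M"
    by blast
  then have M: "is_filter M" "M \<subseteq> R" and max': "\<forall>X. is_filter X \<and> X \<subseteq> R \<and> M \<subseteq> X \<longrightarrow> X = M"
    by auto
  have up': "\<forall>X Y. X \<in> R \<and> X \<subseteq> Y \<longrightarrow> Y \<in> R"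
    using up by blast
  have "A \<in> M \<or> Npos - A \<in> M" if A: "A \<subseteq> Npos" for A
  proof (rule ccontr)
    assume "\<not> (A \<in> M \<or> Npos - A \<in> M)"
    moreover have "Npos - A \<subseteq> Npos"
      by blast
    ultimately obtain C1 C2 where C: "C1 \<in> M" "C1 \<inter> A \<notin> R" "C2 \<in> M" "C2 \<inter> (Npos - A) \<notin> R"
      using maximal_filter_trace_escapes[OF M max' up' A] maximal_filter_trace_escapes[OF M max' up']
      by meson
    have "C1 \<inter> C2 \<in> R"
      using M(2) is_filterD(4)[OF M(1) C(1,3)] by blast
    moreover have "C1 \<inter> C2 \<subseteq> (C1 \<inter> A) \<union> (C2 \<inter> (Npos - A))"
      using is_filterD(1)[OF M(1) C(1)] by blast
    ultimately show False
      using up partition C by blast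
  qed
  moreover have "{} \<notin> M"
    using M(2) assms(2) by blast
  ultimately show ?thesis
    using M is_ultrafilter_iff_filter by blast
qed

lemma ultrafilter_AP_rich_exists: "\<exists>q. is_ultrafilter q \<and> q \<subseteq> Collect AP_rich"
  using ultrafilter_within_partition_regular[of "Collect AP_rich"]
    AP_rich_Npos not_AP_rich_empty AP_rich_mono AP_rich_Un by blast

lemma ultrafilterD:
  assumes "is_ultrafilter q"
  shows "A \<in> q \<Longrightarrow> A \<subseteq> Npos" "Npos \<in> q" "{} \<notin> q"
    "A \<in> q \<Longrightarrow> A \<subseteq> B \<Longrightarrow> B \<subseteq> Npos \<Longrightarrow> B \<in> q" "A \<in> q \<Longrightarrow> B \<in> q \<Longrightarrow> A \<inter> B \<in> q"
    "A \<subseteq> Npos \<Longrightarrow> A \<in> q \<or> Npos - A \<in> q"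
  using assms unfolding is_ultrafilter_def by auto

lemma ultrafilter_Diff_iff:
  assumes "is_ultrafilter q" "A \<subseteq> Npos"
  shows "Npos - A \<in> q \<longleftrightarrow> A \<notin> q"
proof
  assume "Npos - A \<in> q"
  then show "A \<notin> q"
    using ultrafilterD(3,5)[OF assms(1)] by (metis Diff_disjoint inf_commute)
next
  assume "A \<notin> q"
  then show "Npos - A \<in> q"
    using ultrafilterD(6)[OF assms] by blast
qed

lemma ultrafilter_Int_iff:
  assumes "is_ultrafilter q" "A \<subseteq> Npos" "B \<subseteq> Npos"
  shows "A \<inter> B \<in> q \<longleftrightarrow> A \<in> q \<and> B \<in> q"
  using ultrafilterD(4,5)[OF assms(1)] assms(2,3) by (meson inf_le1 inf_le2)

lemma ultrafilter_Inter:
  assumes "is_ultrafilter q" "finite S" "S \<subseteq> q" "B \<in> q"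
  shows "B \<inter> \<Inter>S \<in> q"
  using assms(2-)
proof (induction S)
  case empty
  then show ?case by simp
next
  case (insert X S)
  then have "X \<inter> (B \<inter> \<Inter>S) \<in> q"
    using ultrafilterD(5)[OF assms(1)] by simp
  then show ?case
    by (simp add: Int_ac)
qed

lemma shift_left_subset_Npos: "shift_left x A \<subseteq> Npos"
  unfolding shift_left_def by auto

lemma shift_left_Npos: "shift_left x Npos = Npos"
  unfolding shift_left_def Npos_def by auto

lemma shift_left_mono: "A \<subseteq> B \<Longrightarrow> shift_left x A \<subseteq> shift_left x B"
  unfolding shift_left_def by auto

lemma shift_left_Int: "shift_left x (A \<inter> B) = shift_left x A \<inter> shift_left x B"
  unfolding shift_left_def by auto

lemma shift_left_Diff_Npos: "shift_left x (Npos - A) = Npos - shift_left x A"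
  unfolding shift_left_def Npos_def by auto

lemma shift_left_shift_left: "shift_left y (shift_left x A) = shift_left (x + y) A"
  unfolding shift_left_def Npos_def by (auto simp: add.assoc)

lemma uplus_ultrafilter:
  assumes p: "is_ultrafilter p" and q: "is_ultrafilter q"
  shows "is_ultrafilter (p \<oplus> q)"
proof -
  define S where "S A = {x \<in> Npos. shift_left x A \<in> q}" for A
  have mem: "A \<in> p \<oplus> q \<longleftrightarrow> A \<subseteq> Npos \<and> S A \<in> p" for A
    unfolding uplus_def S_def by simp
  have S_Npos: "S Npos = Npos"
    unfolding S_def shift_left_Npos using ultrafilterD(2)[OF q] by auto
  have S_subset: "S A \<subseteq> Npos" for A
    unfolding S_def by auto
  have S_mono: "S A \<subseteq> S B" if "A \<subseteq> B" for A B
    unfolding S_def using ultrafilterD(4)[OF q _ shift_left_mono[OF that] shift_left_subset_Npos] by blast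
  have S_Int: "S (A \<inter> B) = S A \<inter> S B" for A B
    unfolding S_def shift_left_Int using ultrafilter_Int_iff[OF q shift_left_subset_Npos shift_left_subset_Npos] by auto
  have S_Diff: "S (Npos - A) = Npos - S A" for A
    unfolding S_def shift_left_Diff_Npos using ultrafilter_Diff_iff[OF q shift_left_subset_Npos] by auto
  have "S {} \<notin> p"
    using ultrafilterD(3)[OF p] ultrafilterD(3)[OF q] unfolding S_def shift_left_def by simp
  show ?thesis
    unfolding is_ultrafilter_def
  proof (intro conjI ballI allI impI)
    show "p \<oplus> q \<subseteq> Pow Npos" "Npos \<in> p \<oplus> q" "{} \<notin> p \<oplus> q"
      using mem S_Npos ultrafilterD(2)[OF p] \<open>S {} \<notin> p\<close> by auto
    show "B \<in> p \<oplus> q" if "A \<in> p \<oplus> q" "A \<subseteq> B \<and> B \<subseteq> Npos" for A B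
      using that mem ultrafilterD(4)[OF p] S_mono S_subset by meson
    show "A \<inter> B \<in> p \<oplus> q" if "A \<in> p \<oplus> q" "B \<in> p \<oplus> q" for A B
      using that mem S_Int ultrafilterD(5)[OF p] by (metis inf.coboundedI1)
    show "A \<in> p \<oplus> q \<or> Npos - A \<in> p \<oplus> q" if "A \<subseteq> Npos" for A
      using that mem S_Diff ultrafilterD(6)[OF p S_subset] by auto
  qed
qed

section \<open>Minimal idempotents contain long progressions\<close>

lemma AP_rich_if_shift_left_AP_rich:
  assumes "AP_rich (shift_left x A)"
  shows "AP_rich A"
  unfolding AP_rich_def has_AP_def
proof
  fix k
  obtain a d where "1 \<le> a" "1 \<le> d" "\<forall>i<k. a + i * d \<in> shift_left x A"
    using assms unfolding AP_rich_def has_AP_def by blast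
  then show "\<exists>a d. 1 \<le> a \<and> 1 \<le> d \<and> (\<forall>i<k. a + i * d \<in> A)"
    by (intro exI[of _ "x + a"] exI[of _ d]) (auto simp: shift_left_def add.assoc)
qed

lemma AP_rich_if_return_set_AP_rich:
  assumes r: "is_ultrafilter r" and rich: "AP_rich {x \<in> Npos. shift_left x A \<in> r}"
  shows "AP_rich A"
  unfolding AP_rich_def has_AP_def
proof
  fix k
  obtain a d where ad: "1 \<le> a" "1 \<le> d" "\<forall>i<k. a + i * d \<in> {x \<in> Npos. shift_left x A \<in> r}"
    using rich unfolding AP_rich_def has_AP_def by blast
  have "(\<lambda>i. shift_left (a + i * d) A) ` {..<k} \<subseteq> r"
    using ad(3) by auto
  then have "Npos \<inter> \<Inter>((\<lambda>i. shift_left (a + i * d) A) ` {..<k}) \<in> r"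
    by (intro ultrafilter_Inter[OF r] ultrafilterD(2)[OF r]) auto
  then have "Npos \<inter> \<Inter>((\<lambda>i. shift_left (a + i * d) A) ` {..<k}) \<noteq> {}"
    using ultrafilterD(3)[OF r] by auto
  then obtain y where "y \<in> Npos" "\<forall>i<k. y \<in> shift_left (a + i * d) A"
    by blast
  then show "\<exists>a d. 1 \<le> a \<and> 1 \<le> d \<and> (\<forall>i<k. a + i * d \<in> A)"
    using ad(1,2) by (intro exI[of _ "a + y"] exI[of _ d]) (auto simp: shift_left_def algebra_simps)
qed

definition AP_rich_ultrafilters :: "nat set set set" where
  "AP_rich_ultrafilters = {q \<in> betaN. q \<subseteq> Collect AP_rich}"

lemma is_ideal_AP_rich_ultrafilters: "is_ideal AP_rich_ultrafilters"
  unfolding is_ideal_def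
proof (intro conjI ballI)
  show "AP_rich_ultrafilters \<noteq> {}"
    using ultrafilter_AP_rich_exists unfolding AP_rich_ultrafilters_def betaN_def by blast
  show "AP_rich_ultrafilters \<subseteq> betaN"
    unfolding AP_rich_ultrafilters_def by blast
  fix r q
  assume "r \<in> betaN" "q \<in> AP_rich_ultrafilters"
  then have r: "is_ultrafilter r" and q: "is_ultrafilter q" and q_rich: "q \<subseteq> Collect AP_rich"
    unfolding AP_rich_ultrafilters_def betaN_def by auto
  have "AP_rich A" if "A \<in> r \<oplus> q" for A
  proof -
    have "{x \<in> Npos. shift_left x A \<in> q} \<in> r"
      using that unfolding uplus_def by simp
    then have "{x \<in> Npos. shift_left x A \<in> q} \<noteq> {}"
      by (metis ultrafilterD(3)[OF r])
    then obtain x where "shift_left x A \<in> q"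
      by blast
    then show ?thesis
      using q_rich AP_rich_if_shift_left_AP_rich by blast
  qed
  moreover have "AP_rich A" if "A \<in> q \<oplus> r" for A
  proof -
    have "{x \<in> Npos. shift_left x A \<in> r} \<in> q"
      using that unfolding uplus_def by simp
    then show ?thesis
      using q_rich AP_rich_if_return_set_AP_rich[OF r] by blast
  qed
  ultimately show "r \<oplus> q \<in> AP_rich_ultrafilters" "q \<oplus> r \<in> AP_rich_ultrafilters"
    using uplus_ultrafilter[OF r q] uplus_ultrafilter[OF q r]
    unfolding AP_rich_ultrafilters_def betaN_def by auto
qed

lemma minimal_idempotent_AP_rich:
  assumes "minimal_idempotent p" "A \<in> p"
  shows "AP_rich A"
proof -
  have "p \<in> AP_rich_ultrafilters"
    using assms(1) is_ideal_AP_rich_ultrafilters unfolding minimal_idempotent_def K_betaN_def by blast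
  then show ?thesis
    using assms(2) unfolding AP_rich_ultrafilters_def by blast
qed

section \<open>Star sets of an idempotent ultrafilter\<close>

definition star :: "nat set set \<Rightarrow> nat set \<Rightarrow> nat set" where
  "star p A = {x \<in> A. shift_left x A \<in> p}"

lemma star_subset: "star p A \<subseteq> A"
  unfolding star_def by auto

context
  fixes p :: "nat set set"
  assumes p: "is_ultrafilter p" and idem: "p \<oplus> p = p"
begin

lemma star_mem:
  assumes "A \<in> p"
  shows "star p A \<in> p"
proof -
  have "{x \<in> Npos. shift_left x A \<in> p} \<in> p"
    using assms idem unfolding uplus_def by blast
  moreover have "star p A = A \<inter> {x \<in> Npos. shift_left x A \<in> p}"
    unfolding star_def using ultrafilterD(1)[OF p assms] by auto
  ultimately show ?thesis
    using ultrafilterD(5)[OF p assms] by simp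
qed

lemma shift_left_star_mem:
  assumes "x \<in> star p A"
  shows "shift_left x (star p A) \<in> p"
proof -
  have "star p (shift_left x A) \<subseteq> shift_left x (star p A)"
  proof
    fix y
    assume "y \<in> star p (shift_left x A)"
    then have "y \<in> shift_left x A" "shift_left (x + y) A \<in> p"
      unfolding star_def shift_left_shift_left by auto
    then show "y \<in> shift_left x (star p A)"
      unfolding star_def shift_left_def by simp
  qed
  moreover have "star p (shift_left x A) \<in> p"
    using assms star_mem unfolding star_def by blast
  ultimately show ?thesis
    using ultrafilterD(4)[OF p _ _ shift_left_subset_Npos] by blast
qed

end

lemma setsum_sets_cong: "(\<And>n. n \<in> F \<Longrightarrow> Y n = Z n) \<Longrightarrow> setsum_sets F Y = setsum_sets F Z"
  unfolding setsum_sets_def by (metis (no_types, lifting))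

lemma finite_setsum_sets:
  assumes "finite F" "\<And>n. n \<in> F \<Longrightarrow> finite (Y n)"
  shows "finite (setsum_sets F Y)"
proof -
  have "setsum_sets F Y \<subseteq> (\<lambda>f. \<Sum>n\<in>F. f n) ` PiE F Y"
  proof
    fix s
    assume "s \<in> setsum_sets F Y"
    then obtain f where f: "s = (\<Sum>n\<in>F. f n)" "\<forall>n\<in>F. f n \<in> Y n"
      unfolding setsum_sets_def by blast
    then have "restrict f F \<in> PiE F Y" "s = (\<Sum>n\<in>F. restrict f F n)"
      by auto
    then show "s \<in> (\<lambda>f. \<Sum>n\<in>F. f n) ` PiE F Y"
      by blast
  qed
  moreover have "finite (PiE F Y)"
    using assms by (simp add: finite_PiE)
  ultimately show ?thesis
    using finite_subset by blast
qed

lemma setsum_sets_singleton: "setsum_sets {k} Y = Y k"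
  unfolding setsum_sets_def by force

lemma setsum_sets_insert_subset:
  assumes "finite G" "k \<notin> G"
  shows "setsum_sets (insert k G) Y \<subseteq> {y + s |y s. y \<in> Y k \<and> s \<in> setsum_sets G Y}"
proof
  fix x
  assume "x \<in> setsum_sets (insert k G) Y"
  then obtain f where "x = (\<Sum>n\<in>insert k G. f n)" "\<forall>n\<in>insert k G. f n \<in> Y n"
    unfolding setsum_sets_def by blast
  then have "x = f k + (\<Sum>n\<in>G. f n)" "f k \<in> Y k" "(\<Sum>n\<in>G. f n) \<in> setsum_sets G Y"
    using assms unfolding setsum_sets_def by auto
  then show "x \<in> {y + s |y s. y \<in> Y k \<and> s \<in> setsum_sets G Y}"
    by blast
qed

section \<open>The inductive construction\<close>

text \<open>Sums are required to land in the star sets \<open>C\<^sup>\<star>\<close> rather than merely in \<open>C\<close>: this stronger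
  invariant is what allows the next progression to be chosen.\<close>
definition admissible ::
    "nat set set \<Rightarrow> (nat \<Rightarrow> nat set) \<Rightarrow> (nat \<Rightarrow> nat) \<Rightarrow> nat \<Rightarrow> (nat \<Rightarrow> nat set) \<Rightarrow> bool" where
  "admissible p C a n Y \<longleftrightarrow> (\<forall>m\<in>{1..n}. Y m \<subseteq> C m \<and> is_AP (Y m) (a m)) \<and>
     (\<forall>F. F \<subseteq> {1..n} \<and> F \<noteq> {} \<longrightarrow> setsum_sets F Y \<subseteq> star p (C (Min F)))"

lemma admissible_0: "admissible p C a 0 Y"
  unfolding admissible_def by auto

lemma admissible_Suc:
  assumes adm: "admissible p C a n Y"
    and Z: "is_AP Z (a (Suc n))" "Z \<subseteq> star p (C (Suc n))"
    and Z_shifts: "\<And>F x. F \<subseteq> {1..n} \<Longrightarrow> F \<noteq> {} \<Longrightarrow> x \<in> setsum_sets F Y \<Longrightarrow>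
                    Z \<subseteq> shift_left x (star p (C (Min F)))"
  shows "admissible p C a (Suc n) (Y(Suc n := Z))"
proof -
  define Y' where "Y' = Y(Suc n := Z)"
  have agree: "setsum_sets G Y' = setsum_sets G Y" if "G \<subseteq> {1..n}" for G
    using that unfolding Y'_def by (intro setsum_sets_cong) auto
  have "Y' m \<subseteq> C m \<and> is_AP (Y' m) (a m)" if "m \<in> {1..Suc n}" for m
    using adm Z star_subset that unfolding admissible_def Y'_def by (cases "m = Suc n") auto
  moreover have "setsum_sets F Y' \<subseteq> star p (C (Min F))" if F: "F \<subseteq> {1..Suc n}" "F \<noteq> {}" for F
  proof (cases "Suc n \<in> F")
    case False
    then have "F \<subseteq> {1..n}"
      using F(1) by (auto simp: le_Suc_eq)
    then show ?thesis
      using adm F(2) agree unfolding admissible_def by auto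
  next
    case True
    define G where "G = F - {Suc n}"
    have G: "G \<subseteq> {1..n}" "finite G" "F = insert (Suc n) G" "Suc n \<notin> G"
      using F(1) True unfolding G_def by (auto simp: le_Suc_eq intro: finite_subset)
    show ?thesis
    proof (cases "G = {}")
      case True
      then show ?thesis
        using G(3) Z(2) setsum_sets_singleton by (simp add: Y'_def)
    next
      case False
      have "Min G \<le> n"
        using Min_in[OF G(2) False] G(1) by auto
      then have "Min F = Min G"
        using G(2,3) False by simp
      show ?thesis
      proof
        fix x
        assume "x \<in> setsum_sets F Y'"
        then obtain y s where "x = y + s" "y \<in> Z" "s \<in> setsum_sets G Y"
          using setsum_sets_insert_subset[OF G(2,4), of Y'] G(3) agree[OF G(1)] by (auto simp: Y'_def)
        moreover have "Z \<subseteq> shift_left s (star p (C (Min G)))"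
          using Z_shifts G(1) False \<open>s \<in> setsum_sets G Y\<close> by blast
        ultimately show "x \<in> star p (C (Min F))"
          using \<open>Min F = Min G\<close> unfolding shift_left_def by (auto simp: add.commute)
      qed
    qed
  qed
  ultimately show ?thesis
    unfolding admissible_def Y'_def by blast
qed

lemma admissible_extend:
  assumes mi: "minimal_idempotent p" and C: "\<forall>n\<in>Npos. C n \<in> p" and adm: "admissible p C a n Y"
  shows "\<exists>Z. admissible p C a (Suc n) (Y(Suc n := Z))"
proof -
  have p: "is_ultrafilter p" "p \<oplus> p = p"
    using mi unfolding minimal_idempotent_def betaN_def by auto
  have sums: "setsum_sets F Y \<subseteq> star p (C (Min F))" if "F \<subseteq> {1..n}" "F \<noteq> {}" for F
    using adm that unfolding admissible_def by blast
  define W where "W = (\<Union>F\<in>Pow {1..n} - {{}}. (\<lambda>x. shift_left x (star p (C (Min F)))) ` setsum_sets F Y)"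
  have APs: "\<And>m. m \<in> {1..n} \<Longrightarrow> is_AP (Y m) (a m)"
    using adm unfolding admissible_def by blast
  have "finite (setsum_sets F Y)" if "F \<subseteq> {1..n}" for F
    using finite_subset[OF that] APs is_AP_finite that by (metis finite_atLeastAtMost finite_setsum_sets subsetD)
  then have "finite W"
    unfolding W_def by auto
  moreover have "W \<subseteq> p"
  proof
    fix w
    assume "w \<in> W"
    then obtain F x where F: "F \<subseteq> {1..n}" "F \<noteq> {}" "x \<in> setsum_sets F Y"
      and w: "w = shift_left x (star p (C (Min F)))"
      unfolding W_def by blast
    show "w \<in> p"
      unfolding w using sums[OF F(1,2)] F(3) by (intro shift_left_star_mem[OF p]) blast
  qed
  moreover have "star p (C (Suc n)) \<in> p"
    using star_mem[OF p] C unfolding Npos_def by simp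
  ultimately have "star p (C (Suc n)) \<inter> \<Inter>W \<in> p"
    using ultrafilter_Inter[OF p(1)] by blast
  then have "has_AP (star p (C (Suc n)) \<inter> \<Inter>W) (a (Suc n))"
    using minimal_idempotent_AP_rich[OF mi] unfolding AP_rich_def by blast
  then obtain Z where Z: "Z \<subseteq> star p (C (Suc n)) \<inter> \<Inter>W" "is_AP Z (a (Suc n))"
    by (meson is_AP_subset_if_has_AP)
  have "Z \<subseteq> shift_left x (star p (C (Min F)))"
    if "F \<subseteq> {1..n}" "F \<noteq> {}" "x \<in> setsum_sets F Y" for F x
    using Z(1) that unfolding W_def by blast
  then have "admissible p C a (Suc n) (Y(Suc n := Z))"
    using Z(1) by (intro admissible_Suc[OF adm Z(2)]) auto
  then show ?thesis ..
qed

lemma admissible_chain: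
  assumes "minimal_idempotent p" "\<forall>n\<in>Npos. C n \<in> p"
  obtains Ys where "\<And>n. admissible p C a n (Ys n)" "\<And>n k. k \<le> n \<Longrightarrow> Ys n k = Ys k k"
proof -
  have "\<exists>Ys. \<forall>n. admissible p C a n (Ys n) \<and> Ys (Suc n) = (Ys n)(Suc n := Ys (Suc n) (Suc n))"
  proof (rule dependent_nat_choice[where P = "admissible p C a" and Q = "\<lambda>n Y Y'. Y' = Y(Suc n := Y' (Suc n))"])
    show "\<exists>Y. admissible p C a 0 Y"
      using admissible_0 by blast
    show "\<exists>Y'. admissible p C a (Suc n) Y' \<and> Y' = Y(Suc n := Y' (Suc n))"
      if "admissible p C a n Y" for Y n
      using admissible_extend[OF assms that] by force
  qed
  then obtain Ys where Ys: "\<And>n. admissible p C a n (Ys n)"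
    and grow: "\<And>n. Ys (Suc n) = (Ys n)(Suc n := Ys (Suc n) (Suc n))"
    by blast
  have "Ys n k = Ys k k" if "k \<le> n" for n k
    using that
  proof (induction n)
    case 0
    then show ?case by simp
  next
    case (Suc n)
    show ?case
    proof (cases "k = Suc n")
      case False
      then have "Ys (Suc n) k = Ys n k"
        using fun_cong[OF grow[of n], of k] by simp
      then show ?thesis
        using Suc False by simp
    qed simp
  qed
  then show ?thesis
    using that Ys by blast
qed

theorem theorem2p3:
  fixes p :: "nat set set" and C :: "nat \<Rightarrow> nat set" and a :: "nat \<Rightarrow> nat"
  assumes "minimal_idempotent p"
    and "\<forall>n\<in>Npos. C n \<in> p"
    and "\<forall>n\<in>Npos. a n \<in> Npos"
  shows "\<exists>Y :: nat \<Rightarrow> nat set.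
           (\<forall>n\<in>Npos. Y n \<subseteq> C n \<and> is_AP (Y n) (a n)) \<and>
           (\<forall>F. finite F \<and> F \<noteq> {} \<and> F \<subseteq> Npos \<longrightarrow> setsum_sets F Y \<subseteq> C (Min F))"
proof -
  obtain Ys where adm: "\<And>n. admissible p C a n (Ys n)" and stable: "\<And>n k. k \<le> n \<Longrightarrow> Ys n k = Ys k k"
    using admissible_chain[OF assms(1,2)] by blast
  define Y where "Y k = Ys k k" for k
  have "Y n \<subseteq> C n \<and> is_AP (Y n) (a n)" if "n \<in> Npos" for n
    using adm[of n] that unfolding admissible_def Y_def Npos_def by auto
  moreover have "setsum_sets F Y \<subseteq> C (Min F)" if F: "finite F" "F \<noteq> {}" "F \<subseteq> Npos" for F
  proof -
    have F_le: "F \<subseteq> {1..Max F}"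
      using F unfolding Npos_def by auto
    have "Y k = Ys (Max F) k" if "k \<in> F" for k
      using stable[of k "Max F"] F_le that unfolding Y_def by auto
    then have "setsum_sets F Y = setsum_sets F (Ys (Max F))"
      by (rule setsum_sets_cong)
    also have "\<dots> \<subseteq> star p (C (Min F))"
      using adm[of "Max F"] F_le F(2) unfolding admissible_def by blast
    finally show ?thesis
      using star_subset by blast
  qed
  ultimately show ?thesis
    by (intro exI[of _ Y]) blast
qed

end
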